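(* Under Assumption M (together with the decomposition of Assumption D), with $S_{l,r}(\beta_0)$ the Rademacher representation of the score, $E[S_{l,r}(\beta_0)\mid\mathcal J]=0$ for each $l$, and the conditional variance satisfies $$\Omega_{l_1l_2}(\beta_0):=E\big[n\,S_{l_1,r}(\beta_0)S_{l_2,r}(\beta_0)\mid\mathcal J\big]=\Omega^L_{l_1l_2}(\beta_0)+\Omega^H_{l_1l_2}(\beta_0),$$ where $\Omega^L=\Omega^{L,z}+\Omega^{L,a}+\Omega^{L,u}$ with $\Omega^{L,z}_{l_1l_2}=\frac1n\bar z_{(l_1)}'\big[(I-D_P)V(I-D_P)+D_PD_V(I-2D_P)+V\odot P\odot P\big]\bar z_{(l_2)}$, $\Omega^{L,a}_{l_1l_2}=\frac1n a_{(l_1)}'(D_P-P\odot P)a_{(l_2)}$, $\Omega^{L,u}_{l_1l_2}=\frac1n\operatorname{tr}\big(D_{\Sigma^U(l_1,l_2)}D_V(I-D_P)\big)$, and $\Omega^H=\Omega^{H,z}+\Omega^{H,a}+\Omega^{H,u}$ with $\Omega^{H,z}_{l_1l_2}=\frac1n\bar z_{(l_1)}'(V\odot W)\bar z_{(l_2)}$, $\Omega^{H,a}_{l_1l_2}=-\frac2n a_{(l_1)}'(D_P-P\odot P)^2a_{(l_2)}$, $\Omega^{H,u}_{l_1l_2}=-\frac2n\operatorname{tr}\big(D_{\Sigma^U(l_1,l_2)}\big[D_VD_P(I-2D_P)+\big((VD_\varepsilon\odot VD_\varepsilon)(P\odot P)\big)\odot I\big]\big)$, where $V\odot W$ is the $n\times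 n$ matrix with entries, for $i_1\ne i_2$, $[V\odot W]_{i_1i_2}=V_{i_1i_2}\big[(P_{i_1i_1}P_{i_2i_2}+P_{i_1i_2}^2)(3-4P_{i_1i_1}-4P_{i_2i_2})-2P_{i_1i_1}-2P_{i_2i_2}+2(P_{i_1i_1}+P_{i_2i_2})^2\big]$ and diagonal entries $[V\odot W]_{ii}=-2V_{ii}P_{ii}(1-2P_{ii})-2\sum_{j=1}^nV_{ij}^2\varepsilon_j^2P_{ij}^2$.
   Context: Notation: for a vector $v$, $D_v$ is the diagonal matrix with $v$ on its diagonal; for a square matrix $A$, $D_A=A\odot I$ ($\odot$ the Hadamard product); $\iota$ the vector of ones; $D_\varepsilon^2=D_\varepsilon D_\varepsilon$. Linear IV model: $y_i=x_i'\beta_0+\varepsilon_i$, $x_i=\Pi'z_i+\eta_i$, $i=1,\dots,n$, $x_i\in\mathbb R^p$, $z_i\in\mathbb R^k$; $Z$ has rows $z_i'$, $x_{(l)}$ is the $l$th column of the matrix $X$ with rows $x_i'$, $\bar Z=Z\Pi$ with columns $\bar z_{(l)}$, $V=Z(Z'D_\varepsilon^2Z)^{-1}Z'$, $P=D_\varepsilon VD_\varepsilon$, $M=I-P$. The score at $\beta_0$ is $S_l(\beta_0)=-\frac1nx_{(l)}'(I-D_{P\iota})V\varepsilon$. Assumption M: (a) conditional on $Z$, $\{(\varepsilon_i,\eta_i')\}$ are independent, mean zero, with conditional covariance $\Sigma_i=\begin{pmatrix}\sigma_i^2&\sigma_{12i}'\\\sigma_{12i}&\Sigma_{22i}\end{pmatrix}$;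 (b) eigenvalues of $\Sigma_i$ in $[C^{-1},C]$ a.s.; (c) $E[\varepsilon_i^4\mid Z]\le C$, $E[\|\eta_i\|^4\mid Z]\le C$ a.s.; (d) conditional on $Z$, $\varepsilon\overset d=D_r\varepsilon$ with $r=(r_1,\dots,r_n)'$ independent Rademacher variables independent of everything else. Assumption D: $\eta_i=\varepsilon_ia_i+u_i$, $a_i=\sigma_{12i}/\sigma_i^2$, with $\{u_i\}$ and $\{\varepsilon_i\}$ mutually independent given $Z$. Write $a_{(l)}=(a_{1l},\dots,a_{nl})'$, $\bar x_{(l)}=\bar z_{(l)}+u_{(l)}$ (so $x_{(l)}=\bar x_{(l)}+D_\varepsilon a_{(l)}$), and $D_{\Sigma^U(l_1,l_2)}$ the diagonal matrix with $i$th entry $\operatorname{Cov}(u_{il_1},u_{il_2}\mid Z)$. Rademacher representation: $S_{l,r}(\beta_0)=-\frac1n\bar x_{(l)}'VD_\varepsilon r-\frac1n r'D_{a_{(l)}}Pr+\frac1n r'PD_{a_{(l)}}Pr+\frac1n r'PD_rD_{\bar x_{(l)}}VD_\varepsilon r$, which conditionally on $Z$ has the same distribution as $S_l(\beta_0)$. $\mathcal J=\{\varepsilon_i,z_i\}_{i=1}^n$; conditional expectations given $\mathcal J$ are over $r$ and $\{u_i\}$. *)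

theory Defs
  imports "HOL-Probability.Probability"
begin

definition diagm :: "real^'n \<Rightarrow> real^'n^'n" where
  "diagm v = (\<chi> i j. if i = j then v $ i else 0)"

definition hadamard :: "real^'m^'n \<Rightarrow> real^'m^'n \<Rightarrow> real^'m^'n" (infixl "\<odot>" 71) where
  "A \<odot> B = (\<chi> i j. A $ i $ j * B $ i $ j)"

definition diagpart :: "real^'n^'n \<Rightarrow> real^'n^'n" where
  "diagpart A = A \<odot> mat 1"

definition rademacher_vec :: "(real^'n::finite) pmf" where
  "rademacher_vec = map_pmf vec_lambda (Pi_pmf UNIV 0 (\<lambda>_. pmf_of_set {-1, 1}))"

definition Vmat :: "real^'n \<Rightarrow> real^'k^'n \<Rightarrow> real^'n^'n" where
  "Vmat eps Z = Z ** matrix_inv (transpose Z ** diagm eps ** diagm eps ** Z) ** transpose Z"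

definition Pmat :: "real^'n \<Rightarrow> real^'k^'n \<Rightarrow> real^'n^'n" where
  "Pmat eps Z = diagm eps ** Vmat eps Z ** diagm eps"

(* Rademacher representation S_{l,r}(beta_0), with xbar_(l) = xb, a_(l) = al *)
definition S_rad :: "real^'n \<Rightarrow> real^'k^'n \<Rightarrow> real^'n \<Rightarrow> real^'n \<Rightarrow> real^'n \<Rightarrow> real" where
  "S_rad eps Z xb al r =
     (let n = real CARD('n); V = Vmat eps Z; P = Pmat eps Z; De = diagm eps in
      - (1/n) * (xb \<bullet> (V *v (De *v r)))
      - (1/n) * (r \<bullet> ((diagm al ** P) *v r))
      + (1/n) * (r \<bullet> ((P ** diagm al ** P) *v r))
      + (1/n) * (r \<bullet> ((P ** diagm r ** diagm xb ** V ** De) *v r)))"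

definition VW :: "real^'n \<Rightarrow> real^'k^'n \<Rightarrow> real^'n^'n" where
  "VW eps Z = (let V = Vmat eps Z; P = Pmat eps Z in
     (\<chi> i1 i2. if i1 \<noteq> i2 then
        V$i1$i2 * ((P$i1$i1 * P$i2$i2 + (P$i1$i2)^2) * (3 - 4 * P$i1$i1 - 4 * P$i2$i2)
                   - 2 * P$i1$i1 - 2 * P$i2$i2 + 2 * (P$i1$i1 + P$i2$i2)^2)
      else - 2 * V$i1$i1 * P$i1$i1 * (1 - 2 * P$i1$i1)
           - 2 * (\<Sum>j\<in>UNIV. (V$i1$j)^2 * (eps$j)^2 * (P$i1$j)^2)))"

definition OmegaLz :: "real^'n \<Rightarrow> real^'k^'n \<Rightarrow> real^'n \<Rightarrow> real^'n \<Rightarrow> real" where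
  "OmegaLz eps Z z1 z2 = (let n = real CARD('n); V = Vmat eps Z; P = Pmat eps Z;
      DP = diagpart P; DV = diagpart V; I = (mat 1 :: real^'n^'n) in
     (1/n) * (z1 \<bullet> (((I - DP) ** V ** (I - DP) + DP ** DV ** (I - 2 *\<^sub>R DP) + V \<odot> P \<odot> P) *v z2)))"

definition OmegaLa :: "real^'n \<Rightarrow> real^'k^'n \<Rightarrow> real^'n \<Rightarrow> real^'n \<Rightarrow> real" where
  "OmegaLa eps Z a1 a2 = (let n = real CARD('n); P = Pmat eps Z in
     (1/n) * (a1 \<bullet> ((diagpart P - P \<odot> P) *v a2)))"

(* SU = vector with i-th entry Cov(u_{i l1}, u_{i l2} | Z) *)
definition OmegaLu :: "real^'n \<Rightarrow> real^'k^'n \<Rightarrow> real^'n \<Rightarrow> real" where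
  "OmegaLu eps Z SU = (let n = real CARD('n); V = Vmat eps Z; P = Pmat eps Z in
     (1/n) * trace (diagm SU ** diagpart V ** (mat 1 - diagpart P)))"

definition OmegaHz :: "real^'n \<Rightarrow> real^'k^'n \<Rightarrow> real^'n \<Rightarrow> real^'n \<Rightarrow> real" where
  "OmegaHz eps Z z1 z2 = (1 / real CARD('n)) * (z1 \<bullet> (VW eps Z *v z2))"

definition OmegaHa :: "real^'n \<Rightarrow> real^'k^'n \<Rightarrow> real^'n \<Rightarrow> real^'n \<Rightarrow> real" where
  "OmegaHa eps Z a1 a2 = (let n = real CARD('n); P = Pmat eps Z; A = diagpart P - P \<odot> P in
     - (2/n) * (a1 \<bullet> ((A ** A) *v a2)))"

definition OmegaHu :: "real^'n \<Rightarrow> real^'k^'n \<Rightarrow> real^'n \<Rightarrow> real" where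
  "OmegaHu eps Z SU = (let n = real CARD('n); V = Vmat eps Z; P = Pmat eps Z;
      DP = diagpart P; DV = diagpart V; VD = V ** diagm eps in
     - (2/n) * trace (diagm SU ** (DV ** DP ** (mat 1 - 2 *\<^sub>R DP)
                                   + ((VD \<odot> VD) ** (P \<odot> P)) \<odot> mat 1)))"

end

theory Submission
  imports Defs
begin

text \<open>Conditionally on the design, the score is
  \<open>(1/n)(\<Sum>\<^sub>j x\<^sub>j c\<^sub>j(r) + \<Sum>\<^sub>j a\<^sub>j d\<^sub>j(r))\<close> with \<open>c\<^sub>j\<close> odd and \<open>d\<^sub>j\<close> even polynomials of degree
  at most three in the signs \<open>r\<close>. Averaging over the noise \<open>u\<close> (independent, centred rows)
  keeps only the diagonal covariances; averaging over \<open>r\<close> uses parity and the moments of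
  products of two, four and six linear forms in independent signs. Every inner product of rows
  of \<open>V D\<^sub>\<epsilon>\<close> and \<open>P\<close> that these moments produce collapses to an entry of \<open>V\<close> or \<open>P\<close>
  by the projection identity \<open>V D\<^sub>\<epsilon>\<^sup>2 V = V\<close>.\<close>

section \<open>Moments of Rademacher vectors\<close>

definition sign_vectors :: "(real^'n) set" where
  "sign_vectors = {s. \<forall>i. s $ i \<in> {-1, 1}}"

definition rad_mean :: "(real^'n \<Rightarrow> real) \<Rightarrow> real" where
  "rad_mean f = sum f sign_vectors / card (sign_vectors :: (real^'n) set)"

definition kdelta :: "'a \<Rightarrow> 'a \<Rightarrow> real" where
  "kdelta i j = (if i = j then 1 else 0)"

definition inner4 :: "real^'n \<Rightarrow> real^'n \<Rightarrow> real^'n \<Rightarrow> real^'n \<Rightarrow> real" where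
  "inner4 a b c d = (\<Sum>i\<in>UNIV. a $ i * b $ i * c $ i * d $ i)"

definition inner6 :: "real^'n \<Rightarrow> real^'n \<Rightarrow> real^'n \<Rightarrow> real^'n \<Rightarrow> real^'n \<Rightarrow> real^'n \<Rightarrow> real" where
  "inner6 a b c d e f = (\<Sum>i\<in>UNIV. a $ i * b $ i * c $ i * d $ i * e $ i * f $ i)"

lemma mult_if_zero:
  "x * (if P then y else 0) = (if P then x * y else (0::real))"
  "(if P then y else 0) * x = (if P then y * x else (0::real))"
  by simp_all

lemma sum_if_zero: "(\<Sum>j\<in>A. if P then f j else 0) = (if P then (\<Sum>j\<in>A. f j) else (0::real))"
  by simp

lemma inner_vec_sum: "(a::real^'n) \<bullet> s = (\<Sum>i\<in>UNIV. a $ i * s $ i)"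
  by (simp add: inner_vec_def)

lemma sign_vectors_eq: "sign_vectors = vec_lambda ` PiE_dflt UNIV 0 (\<lambda>_. {-1::real, 1})"
proof (intro equalityI subsetI)
  fix s :: "real^'n" assume "s \<in> sign_vectors"
  then have "vec_nth s \<in> PiE_dflt UNIV 0 (\<lambda>_. {-1, 1})"
    by (simp add: sign_vectors_def PiE_dflt_def)
  then show "s \<in> vec_lambda ` PiE_dflt UNIV 0 (\<lambda>_. {-1, 1})"
    by (rule rev_image_eqI) simp
qed (auto simp: sign_vectors_def PiE_dflt_def)

lemma finite_sign_vectors: "finite (sign_vectors :: (real^'n::finite) set)"
  unfolding sign_vectors_eq by (intro finite_imageI finite_PiE_dflt) auto

lemma card_sign_vectors_pos: "card (sign_vectors :: (real^'n::finite) set) > 0"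
proof -
  have "(\<chi> i. 1) \<in> (sign_vectors :: (real^'n) set)" by (simp add: sign_vectors_def)
  thus ?thesis using finite_sign_vectors card_gt_0_iff by blast
qed

lemma rademacher_vec_eq_pmf_of_set:
  "rademacher_vec = pmf_of_set (sign_vectors :: (real^'n::finite) set)"
  unfolding rademacher_vec_def sign_vectors_eq
  by (subst Pi_pmf_of_set) (auto intro!: map_pmf_of_set_inj inj_onI simp: vec_eq_iff)

lemma expectation_rademacher_vec: "measure_pmf.expectation rademacher_vec f = rad_mean f"
  unfolding rademacher_vec_eq_pmf_of_set rad_mean_def
  using finite_sign_vectors card_sign_vectors_pos
  by (intro integral_pmf_of_set) (auto simp: card_gt_0_iff)

lemma rad_mean_cong: "(\<And>s. s \<in> sign_vectors \<Longrightarrow> f s = g s) \<Longrightarrow> rad_mean f = rad_mean g"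
  unfolding rad_mean_def by (simp cong: sum.cong)

lemma rad_mean_add: "rad_mean (\<lambda>s. f s + g s) = rad_mean f + rad_mean g"
  unfolding rad_mean_def by (simp add: sum.distrib add_divide_distrib)

lemma rad_mean_diff: "rad_mean (\<lambda>s. f s - g s) = rad_mean f - rad_mean g"
  unfolding rad_mean_def by (simp add: sum_subtractf diff_divide_distrib)

lemma rad_mean_cmult: "rad_mean (\<lambda>s. c * f s) = c * rad_mean f"
  unfolding rad_mean_def by (simp add: sum_distrib_left)

lemma rad_mean_sum: "finite A \<Longrightarrow> rad_mean (\<lambda>s. \<Sum>i\<in>A. f i s) = (\<Sum>i\<in>A. rad_mean (f i))"
  unfolding rad_mean_def by (subst sum.swap) (simp add: sum_divide_distrib)

lemma rad_mean_const: "rad_mean (\<lambda>s::real^'n. c) = c"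
  using card_sign_vectors_pos[where 'n='n] unfolding rad_mean_def by simp

lemma rad_mean_odd:
  assumes "\<And>s. s \<in> sign_vectors \<Longrightarrow> g s \<in> sign_vectors" and "\<And>s. g (g s) = s"
    and "\<And>s. s \<in> sign_vectors \<Longrightarrow> f (g s) = - f s"
  shows "rad_mean f = 0"
proof -
  have "sum f sign_vectors = sum (\<lambda>s. f (g s)) sign_vectors"
    by (rule sum.reindex_bij_witness[of _ g g]) (use assms(1,2) in auto)
  also have "\<dots> = - sum f sign_vectors"
    using assms(3) by (simp add: sum_negf[symmetric])
  finally show ?thesis unfolding rad_mean_def by simp
qed

lemma rad_mean_odd_coord:
  assumes "\<And>s. f (\<chi> k. if k = i then - s $ k else s $ k) = - f s"
  shows "rad_mean f = 0"
  by (rule rad_mean_odd[where g = "\<lambda>s. \<chi> k. if k = i then - s $ k else s $ k"])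
     (auto simp: sign_vectors_def vec_eq_iff assms)

lemma rad_mean_odd_neg: "(\<And>s. f (- s) = - f s) \<Longrightarrow> rad_mean f = 0"
  by (rule rad_mean_odd[where g = uminus]) (auto simp: sign_vectors_def)

lemma sign_vectors_sq: "s \<in> sign_vectors \<Longrightarrow> s $ i * s $ i = 1"
proof -
  assume "s \<in> sign_vectors"
  then have "s $ i = -1 \<or> s $ i = 1" by (simp add: sign_vectors_def)
  then show ?thesis by auto
qed

lemma rad_mean_coord_sq: "rad_mean (\<lambda>s. s $ i * s $ i * f s) = rad_mean f"
  by (rule rad_mean_cong) (simp add: sign_vectors_sq)

lemma rad_mean_coord2: "rad_mean (\<lambda>s. s $ i * s $ j) = kdelta i j"
proof (cases "i = j")
  case True
  then show ?thesis
    using rad_mean_coord_sq[of i "\<lambda>_. 1"] by (simp add: rad_mean_const kdelta_def)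
next
  case False
  have "rad_mean (\<lambda>s. s $ i * s $ j) = 0"
    by (rule rad_mean_odd_coord[of _ i]) (use False in simp)
  then show ?thesis using False by (simp add: kdelta_def)
qed

lemma rad_mean_coord4:
  "rad_mean (\<lambda>s. s $ i1 * s $ i2 * s $ i3 * s $ i4) =
     kdelta i1 i2 * kdelta i3 i4 + kdelta i1 i3 * kdelta i2 i4
   + kdelta i1 i4 * kdelta i2 i3 - 2 * (kdelta i1 i2 * kdelta i1 i3 * kdelta i1 i4)"
proof -
  consider "i1 = i2" | "i1 = i3" | "i1 = i4" | "i1 \<noteq> i2" "i1 \<noteq> i3" "i1 \<noteq> i4" by blast
  then show ?thesis
  proof cases
    case 1
    then show ?thesis
      using rad_mean_coord_sq[of i1 "\<lambda>s. s $ i3 * s $ i4"]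
      by (simp add: mult.assoc rad_mean_coord2 kdelta_def)
  next
    case 2
    then show ?thesis
      using rad_mean_coord_sq[of i1 "\<lambda>s. s $ i2 * s $ i4"]
      by (simp add: ac_simps rad_mean_coord2 kdelta_def)
  next
    case 3
    then show ?thesis
      using rad_mean_coord_sq[of i1 "\<lambda>s. s $ i2 * s $ i3"]
      by (simp add: ac_simps rad_mean_coord2 kdelta_def)
  next
    case 4
    have "rad_mean (\<lambda>s. s $ i1 * s $ i2 * s $ i3 * s $ i4) = 0"
      by (rule rad_mean_odd_coord[of _ i1]) (use 4 in simp)
    then show ?thesis using 4 by (simp add: kdelta_def)
  qed
qed

lemma rad_mean_inner2: "rad_mean (\<lambda>s. (a \<bullet> s) * (b \<bullet> s)) = a \<bullet> b"
proof -
  have "rad_mean (\<lambda>s. (a \<bullet> s) * (b \<bullet> s))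
      = rad_mean (\<lambda>s. \<Sum>i1\<in>UNIV. \<Sum>i2\<in>UNIV. (a $ i1 * b $ i2) * (s $ i1 * s $ i2))"
    by (simp add: inner_vec_sum sum_product ac_simps)
  also have "\<dots> = (\<Sum>i1\<in>UNIV. \<Sum>i2\<in>UNIV. (a $ i1 * b $ i2) * kdelta i1 i2)"
    by (simp add: rad_mean_sum rad_mean_cmult rad_mean_coord2)
  also have "\<dots> = a \<bullet> b"
    unfolding kdelta_def inner_vec_sum by (simp add: mult_if_zero)
  finally show ?thesis .
qed

lemma rad_mean_inner4:
  "rad_mean (\<lambda>s. (a \<bullet> s) * (b \<bullet> s) * (c \<bullet> s) * (d \<bullet> s)) =
     (a \<bullet> b) * (c \<bullet> d) + (a \<bullet> c) * (b \<bullet> d) + (a \<bullet> d) * (b \<bullet> c) - 2 * inner4 a b c d"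
proof -
  have expand: "(a * b * c * d) * (s * t * u * v) = (a * s) * (b * t) * (c * u) * (d * (v::real))"
    for a b c d s t u v by (simp add: ac_simps)
  have "rad_mean (\<lambda>s. (a \<bullet> s) * (b \<bullet> s) * (c \<bullet> s) * (d \<bullet> s)) =
     rad_mean (\<lambda>s. \<Sum>i1\<in>UNIV. \<Sum>i2\<in>UNIV. \<Sum>i3\<in>UNIV. \<Sum>i4\<in>UNIV.
        (a $ i1 * b $ i2 * c $ i3 * d $ i4) * (s $ i1 * s $ i2 * s $ i3 * s $ i4))"
    by (simp only: expand inner_vec_sum sum_distrib_left[symmetric] sum_distrib_right[symmetric])
  also have "\<dots> = (\<Sum>i1\<in>UNIV. \<Sum>i2\<in>UNIV. \<Sum>i3\<in>UNIV. \<Sum>i4\<in>UNIV. (a $ i1 * b $ i2 * c $ i3 * d $ i4) *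
     (kdelta i1 i2 * kdelta i3 i4 + kdelta i1 i3 * kdelta i2 i4
      + kdelta i1 i4 * kdelta i2 i3 - 2 * (kdelta i1 i2 * kdelta i1 i3 * kdelta i1 i4)))"
    by (simp add: rad_mean_sum rad_mean_cmult rad_mean_coord4)
  also have "\<dots> = (\<Sum>i1\<in>UNIV. \<Sum>i2\<in>UNIV. a $ i1 * b $ i1 * c $ i2 * d $ i2)
     + (\<Sum>i1\<in>UNIV. \<Sum>i2\<in>UNIV. a $ i1 * c $ i1 * b $ i2 * d $ i2)
     + (\<Sum>i1\<in>UNIV. \<Sum>i2\<in>UNIV. a $ i1 * d $ i1 * b $ i2 * c $ i2)
     - 2 * (\<Sum>i\<in>UNIV. a $ i * b $ i * c $ i * d $ i)"
    unfolding kdelta_def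
    by (simp add: mult_if_zero sum_if_zero sum.distrib sum_subtractf sum_distrib_left algebra_simps)
  also have "\<dots> = (a \<bullet> b) * (c \<bullet> d) + (a \<bullet> c) * (b \<bullet> d) + (a \<bullet> d) * (b \<bullet> c) - 2 * inner4 a b c d"
    by (simp only: inner_vec_sum inner4_def sum_product mult.assoc)
  finally show ?thesis .
qed

text \<open>The sixth joint moment of independent signs: the pairings of the six indices, corrected
  for coinciding indices (an index occurring four times is counted thrice by the pairings but has
  moment one; one occurring six times is counted 15 - 2 * 15 times).\<close>

definition moment6 :: "'a \<Rightarrow> 'a \<Rightarrow> 'a \<Rightarrow> 'a \<Rightarrow> 'a \<Rightarrow> 'a \<Rightarrow> real" where
  "moment6 i1 i2 i3 i4 i5 i6 = (kdelta i1 i2*kdelta i3 i4*kdelta i5 i6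
      + kdelta i1 i2*kdelta i3 i5*kdelta i4 i6 + kdelta i1 i2*kdelta i3 i6*kdelta i4 i5
      + kdelta i1 i3*kdelta i2 i4*kdelta i5 i6 + kdelta i1 i3*kdelta i2 i5*kdelta i4 i6
      + kdelta i1 i3*kdelta i2 i6*kdelta i4 i5 + kdelta i1 i4*kdelta i2 i3*kdelta i5 i6
      + kdelta i1 i4*kdelta i2 i5*kdelta i3 i6 + kdelta i1 i4*kdelta i2 i6*kdelta i3 i5
      + kdelta i1 i5*kdelta i2 i3*kdelta i4 i6 + kdelta i1 i5*kdelta i2 i4*kdelta i3 i6
      + kdelta i1 i5*kdelta i2 i6*kdelta i3 i4 + kdelta i1 i6*kdelta i2 i3*kdelta i4 i5
      + kdelta i1 i6*kdelta i2 i4*kdelta i3 i5 + kdelta i1 i6*kdelta i2 i5*kdelta i3 i4)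
      - 2 * (kdelta i1 i2 * kdelta i3 i4 * kdelta i3 i5 * kdelta i3 i6
          + kdelta i1 i3 * kdelta i2 i4 * kdelta i2 i5 * kdelta i2 i6
          + kdelta i1 i4 * kdelta i2 i3 * kdelta i2 i5 * kdelta i2 i6
          + kdelta i1 i5 * kdelta i2 i3 * kdelta i2 i4 * kdelta i2 i6
          + kdelta i1 i6 * kdelta i2 i3 * kdelta i2 i4 * kdelta i2 i5
          + kdelta i2 i3 * kdelta i1 i4 * kdelta i1 i5 * kdelta i1 i6
          + kdelta i2 i4 * kdelta i1 i3 * kdelta i1 i5 * kdelta i1 i6
          + kdelta i2 i5 * kdelta i1 i3 * kdelta i1 i4 * kdelta i1 i6
          + kdelta i2 i6 * kdelta i1 i3 * kdelta i1 i4 * kdelta i1 i5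
          + kdelta i3 i4 * kdelta i1 i2 * kdelta i1 i5 * kdelta i1 i6
          + kdelta i3 i5 * kdelta i1 i2 * kdelta i1 i4 * kdelta i1 i6
          + kdelta i3 i6 * kdelta i1 i2 * kdelta i1 i4 * kdelta i1 i5
          + kdelta i4 i5 * kdelta i1 i2 * kdelta i1 i3 * kdelta i1 i6
          + kdelta i4 i6 * kdelta i1 i2 * kdelta i1 i3 * kdelta i1 i5
          + kdelta i5 i6 * kdelta i1 i2 * kdelta i1 i3 * kdelta i1 i4)
      + 16 * (kdelta i1 i2 * kdelta i1 i3 * kdelta i1 i4 * kdelta i1 i5 * kdelta i1 i6)"

lemma moment6_repeated_index:
  "moment6 i1 i1 i3 i4 i5 i6 = kdelta i3 i4 * kdelta i5 i6 + kdelta i3 i5 * kdelta i4 i6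
      + kdelta i3 i6 * kdelta i4 i5
      - 2 * (kdelta i3 i4 * kdelta i3 i5 * kdelta i3 i6)"
  "moment6 i1 i2 i1 i4 i5 i6 = kdelta i2 i4 * kdelta i5 i6 + kdelta i2 i5 * kdelta i4 i6
      + kdelta i2 i6 * kdelta i4 i5
      - 2 * (kdelta i2 i4 * kdelta i2 i5 * kdelta i2 i6)"
  "moment6 i1 i2 i3 i1 i5 i6 = kdelta i2 i3 * kdelta i5 i6 + kdelta i2 i5 * kdelta i3 i6
      + kdelta i2 i6 * kdelta i3 i5
      - 2 * (kdelta i2 i3 * kdelta i2 i5 * kdelta i2 i6)"
  "moment6 i1 i2 i3 i4 i1 i6 = kdelta i2 i3 * kdelta i4 i6 + kdelta i2 i4 * kdelta i3 i6
      + kdelta i2 i6 * kdelta i3 i4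
      - 2 * (kdelta i2 i3 * kdelta i2 i4 * kdelta i2 i6)"
  "moment6 i1 i2 i3 i4 i5 i1 = kdelta i2 i3 * kdelta i4 i5 + kdelta i2 i4 * kdelta i3 i5
      + kdelta i2 i5 * kdelta i3 i4
      - 2 * (kdelta i2 i3 * kdelta i2 i4 * kdelta i2 i5)"
  unfolding moment6_def kdelta_def by auto

lemma rad_mean_coord6:
  "rad_mean (\<lambda>s. s $ i1 * s $ i2 * s $ i3 * s $ i4 * s $ i5 * s $ i6) = moment6 i1 i2 i3 i4 i5 i6"
  (is "rad_mean ?f = _")
proof -
  consider "i1 = i2" | "i1 = i3" | "i1 = i4" | "i1 = i5" | "i1 = i6"
    | "i1 \<noteq> i2" "i1 \<noteq> i3" "i1 \<noteq> i4" "i1 \<noteq> i5" "i1 \<noteq> i6"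
    by blast
  then show ?thesis
  proof cases
    case 1
    have "rad_mean ?f = rad_mean (\<lambda>s. s $ i3 * s $ i4 * s $ i5 * s $ i6)"
      using 1 rad_mean_coord_sq[of i1 "\<lambda>s. s $ i3 * s $ i4 * s $ i5 * s $ i6"]
      by (simp add: ac_simps)
    then show ?thesis using 1 moment6_repeated_index(1)[of i1 i3 i4 i5 i6]
      by (simp add: rad_mean_coord4)
  next
    case 2
    have "rad_mean ?f = rad_mean (\<lambda>s. s $ i2 * s $ i4 * s $ i5 * s $ i6)"
      using 2 rad_mean_coord_sq[of i1 "\<lambda>s. s $ i2 * s $ i4 * s $ i5 * s $ i6"]
      by (simp add: ac_simps)
    then show ?thesis using 2 moment6_repeated_index(2)[of i1 i2 i4 i5 i6]
      by (simp add: rad_mean_coord4)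
  next
    case 3
    have "rad_mean ?f = rad_mean (\<lambda>s. s $ i2 * s $ i3 * s $ i5 * s $ i6)"
      using 3 rad_mean_coord_sq[of i1 "\<lambda>s. s $ i2 * s $ i3 * s $ i5 * s $ i6"]
      by (simp add: ac_simps)
    then show ?thesis using 3 moment6_repeated_index(3)[of i1 i2 i3 i5 i6]
      by (simp add: rad_mean_coord4)
  next
    case 4
    have "rad_mean ?f = rad_mean (\<lambda>s. s $ i2 * s $ i3 * s $ i4 * s $ i6)"
      using 4 rad_mean_coord_sq[of i1 "\<lambda>s. s $ i2 * s $ i3 * s $ i4 * s $ i6"]
      by (simp add: ac_simps)
    then show ?thesis using 4 moment6_repeated_index(4)[of i1 i2 i3 i4 i6]
      by (simp add: rad_mean_coord4)
  next
    case 5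
    have "rad_mean ?f = rad_mean (\<lambda>s. s $ i2 * s $ i3 * s $ i4 * s $ i5)"
      using 5 rad_mean_coord_sq[of i1 "\<lambda>s. s $ i2 * s $ i3 * s $ i4 * s $ i5"]
      by (simp add: ac_simps)
    then show ?thesis using 5 moment6_repeated_index(5)[of i1 i2 i3 i4 i5]
      by (simp add: rad_mean_coord4)
  next
    case 6
    have "rad_mean ?f = 0"
      by (rule rad_mean_odd_coord[of _ i1]) (use 6 in simp)
    then show ?thesis using 6 by (simp add: moment6_def kdelta_def)
  qed
qed

lemma sum_product3:
  "(\<Sum>i\<in>A. f i) * (\<Sum>j\<in>B. g j) * (\<Sum>k\<in>C. h k)
     = (\<Sum>i\<in>A. \<Sum>j\<in>B. \<Sum>k\<in>C. f i * g j * (h k::real))"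
proof -
  have "(\<Sum>i\<in>A. \<Sum>j\<in>B. \<Sum>k\<in>C. f i * g j * h k) = (\<Sum>i\<in>A. \<Sum>j\<in>B. f i * g j * (\<Sum>k\<in>C. h k))"
    by (simp add: sum_distrib_left)
  also have "\<dots> = (\<Sum>i\<in>A. \<Sum>j\<in>B. f i * g j) * (\<Sum>k\<in>C. h k)"
    by (simp add: sum_distrib_right)
  also have "\<dots> = (\<Sum>i\<in>A. f i) * (\<Sum>j\<in>B. g j) * (\<Sum>k\<in>C. h k)"
    by (simp add: sum_product)
  finally show ?thesis by simp
qed

lemma rad_mean_inner6:
  "rad_mean (\<lambda>s. (a1 \<bullet> s) * (a2 \<bullet> s) * (a3 \<bullet> s) * (a4 \<bullet> s) * (a5 \<bullet> s) * (a6 \<bullet> s))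
   = ((a1 \<bullet> a2) * (a3 \<bullet> a4) * (a5 \<bullet> a6)
    + (a1 \<bullet> a2) * (a3 \<bullet> a5) * (a4 \<bullet> a6)
    + (a1 \<bullet> a2) * (a3 \<bullet> a6) * (a4 \<bullet> a5)
    + (a1 \<bullet> a3) * (a2 \<bullet> a4) * (a5 \<bullet> a6)
    + (a1 \<bullet> a3) * (a2 \<bullet> a5) * (a4 \<bullet> a6)
    + (a1 \<bullet> a3) * (a2 \<bullet> a6) * (a4 \<bullet> a5)
    + (a1 \<bullet> a4) * (a2 \<bullet> a3) * (a5 \<bullet> a6)
    + (a1 \<bullet> a4) * (a2 \<bullet> a5) * (a3 \<bullet> a6)
    + (a1 \<bullet> a4) * (a2 \<bullet> a6) * (a3 \<bullet> a5)
    + (a1 \<bullet> a5) * (a2 \<bullet> a3) * (a4 \<bullet> a6)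
    + (a1 \<bullet> a5) * (a2 \<bullet> a4) * (a3 \<bullet> a6)
    + (a1 \<bullet> a5) * (a2 \<bullet> a6) * (a3 \<bullet> a4)
    + (a1 \<bullet> a6) * (a2 \<bullet> a3) * (a4 \<bullet> a5)
    + (a1 \<bullet> a6) * (a2 \<bullet> a4) * (a3 \<bullet> a5)
    + (a1 \<bullet> a6) * (a2 \<bullet> a5) * (a3 \<bullet> a4))
    - 2 * ((a1 \<bullet> a2) * inner4 a3 a4 a5 a6 + (a1 \<bullet> a3) * inner4 a2 a4 a5 a6
    + (a1 \<bullet> a4) * inner4 a2 a3 a5 a6 + (a1 \<bullet> a5) * inner4 a2 a3 a4 a6
    + (a1 \<bullet> a6) * inner4 a2 a3 a4 a5 + inner4 a1 a4 a5 a6 * (a2 \<bullet> a3)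
    + inner4 a1 a3 a5 a6 * (a2 \<bullet> a4) + inner4 a1 a3 a4 a6 * (a2 \<bullet> a5)
    + inner4 a1 a3 a4 a5 * (a2 \<bullet> a6) + inner4 a1 a2 a5 a6 * (a3 \<bullet> a4)
    + inner4 a1 a2 a4 a6 * (a3 \<bullet> a5) + inner4 a1 a2 a4 a5 * (a3 \<bullet> a6)
    + inner4 a1 a2 a3 a6 * (a4 \<bullet> a5) + inner4 a1 a2 a3 a5 * (a4 \<bullet> a6)
    + inner4 a1 a2 a3 a4 * (a5 \<bullet> a6)) + 16 * inner6 a1 a2 a3 a4 a5 a6"
proof -
  have expand: "(a * b * c * d * e * f) * (s * t * u * v * w * x)
      = (a * s) * (b * t) * (c * u) * (d * v) * (e * w) * (f * (x::real))"
    for a b c d e f s t u v w x by (simp add: ac_simps)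
  have "rad_mean (\<lambda>s. (a1 \<bullet> s) * (a2 \<bullet> s) * (a3 \<bullet> s) * (a4 \<bullet> s) * (a5 \<bullet> s) * (a6 \<bullet> s)) =
     rad_mean (\<lambda>s. \<Sum>i1\<in>UNIV. \<Sum>i2\<in>UNIV. \<Sum>i3\<in>UNIV. \<Sum>i4\<in>UNIV. \<Sum>i5\<in>UNIV. \<Sum>i6\<in>UNIV.
       (a1$i1*a2$i2*a3$i3*a4$i4*a5$i5*a6$i6) * (s$i1 * s$i2 * s$i3 * s$i4 * s$i5 * s$i6))"
    by (simp only: expand,
        simp only: inner_vec_sum sum_distrib_left[symmetric] sum_distrib_right[symmetric])
  also have "\<dots> = (\<Sum>i1\<in>UNIV. \<Sum>i2\<in>UNIV. \<Sum>i3\<in>UNIV. \<Sum>i4\<in>UNIV. \<Sum>i5\<in>UNIV. \<Sum>i6\<in>UNIV.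
       (a1$i1*a2$i2*a3$i3*a4$i4*a5$i5*a6$i6) * moment6 i1 i2 i3 i4 i5 i6)"
    by (simp add: rad_mean_sum rad_mean_cmult rad_mean_coord6)
  also have "\<dots> = ((\<Sum>j0\<in>UNIV. \<Sum>j1\<in>UNIV. \<Sum>j2\<in>UNIV. a1$j0*a2$j0 * a3$j1*a4$j1 * a5$j2*a6$j2)
      + (\<Sum>j0\<in>UNIV. \<Sum>j1\<in>UNIV. \<Sum>j2\<in>UNIV. a1$j0*a2$j0 * a3$j1*a5$j1 * a4$j2*a6$j2)
      + (\<Sum>j0\<in>UNIV. \<Sum>j1\<in>UNIV. \<Sum>j2\<in>UNIV. a1$j0*a2$j0 * a3$j1*a6$j1 * a4$j2*a5$j2)
      + (\<Sum>j0\<in>UNIV. \<Sum>j1\<in>UNIV. \<Sum>j2\<in>UNIV. a1$j0*a3$j0 * a2$j1*a4$j1 * a5$j2*a6$j2)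
      + (\<Sum>j0\<in>UNIV. \<Sum>j1\<in>UNIV. \<Sum>j2\<in>UNIV. a1$j0*a3$j0 * a2$j1*a5$j1 * a4$j2*a6$j2)
      + (\<Sum>j0\<in>UNIV. \<Sum>j1\<in>UNIV. \<Sum>j2\<in>UNIV. a1$j0*a3$j0 * a2$j1*a6$j1 * a4$j2*a5$j2)
      + (\<Sum>j0\<in>UNIV. \<Sum>j1\<in>UNIV. \<Sum>j2\<in>UNIV. a1$j0*a4$j0 * a2$j1*a3$j1 * a5$j2*a6$j2)
      + (\<Sum>j0\<in>UNIV. \<Sum>j1\<in>UNIV. \<Sum>j2\<in>UNIV. a1$j0*a4$j0 * a2$j1*a5$j1 * a3$j2*a6$j2)
      + (\<Sum>j0\<in>UNIV. \<Sum>j1\<in>UNIV. \<Sum>j2\<in>UNIV. a1$j0*a4$j0 * a2$j1*a6$j1 * a3$j2*a5$j2)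
      + (\<Sum>j0\<in>UNIV. \<Sum>j1\<in>UNIV. \<Sum>j2\<in>UNIV. a1$j0*a5$j0 * a2$j1*a3$j1 * a4$j2*a6$j2)
      + (\<Sum>j0\<in>UNIV. \<Sum>j1\<in>UNIV. \<Sum>j2\<in>UNIV. a1$j0*a5$j0 * a2$j1*a4$j1 * a3$j2*a6$j2)
      + (\<Sum>j0\<in>UNIV. \<Sum>j1\<in>UNIV. \<Sum>j2\<in>UNIV. a1$j0*a5$j0 * a2$j1*a6$j1 * a3$j2*a4$j2)
      + (\<Sum>j0\<in>UNIV. \<Sum>j1\<in>UNIV. \<Sum>j2\<in>UNIV. a1$j0*a6$j0 * a2$j1*a3$j1 * a4$j2*a5$j2)
      + (\<Sum>j0\<in>UNIV. \<Sum>j1\<in>UNIV. \<Sum>j2\<in>UNIV. a1$j0*a6$j0 * a2$j1*a4$j1 * a3$j2*a5$j2)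
      + (\<Sum>j0\<in>UNIV. \<Sum>j1\<in>UNIV. \<Sum>j2\<in>UNIV. a1$j0*a6$j0 * a2$j1*a5$j1 * a3$j2*a4$j2))
      - 2 * ((\<Sum>j0\<in>UNIV. \<Sum>j1\<in>UNIV. a1$j0*a2$j0 * a3$j1*a4$j1*a5$j1*a6$j1)
      + (\<Sum>j0\<in>UNIV. \<Sum>j1\<in>UNIV. a1$j0*a3$j0 * a2$j1*a4$j1*a5$j1*a6$j1)
      + (\<Sum>j0\<in>UNIV. \<Sum>j1\<in>UNIV. a1$j0*a4$j0 * a2$j1*a3$j1*a5$j1*a6$j1)
      + (\<Sum>j0\<in>UNIV. \<Sum>j1\<in>UNIV. a1$j0*a5$j0 * a2$j1*a3$j1*a4$j1*a6$j1)
      + (\<Sum>j0\<in>UNIV. \<Sum>j1\<in>UNIV. a1$j0*a6$j0 * a2$j1*a3$j1*a4$j1*a5$j1)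
      + (\<Sum>j0\<in>UNIV. \<Sum>j1\<in>UNIV. a1$j0*a4$j0*a5$j0*a6$j0 * a2$j1*a3$j1)
      + (\<Sum>j0\<in>UNIV. \<Sum>j1\<in>UNIV. a1$j0*a3$j0*a5$j0*a6$j0 * a2$j1*a4$j1)
      + (\<Sum>j0\<in>UNIV. \<Sum>j1\<in>UNIV. a1$j0*a3$j0*a4$j0*a6$j0 * a2$j1*a5$j1)
      + (\<Sum>j0\<in>UNIV. \<Sum>j1\<in>UNIV. a1$j0*a3$j0*a4$j0*a5$j0 * a2$j1*a6$j1)
      + (\<Sum>j0\<in>UNIV. \<Sum>j1\<in>UNIV. a1$j0*a2$j0*a5$j0*a6$j0 * a3$j1*a4$j1)
      + (\<Sum>j0\<in>UNIV. \<Sum>j1\<in>UNIV. a1$j0*a2$j0*a4$j0*a6$j0 * a3$j1*a5$j1)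
      + (\<Sum>j0\<in>UNIV. \<Sum>j1\<in>UNIV. a1$j0*a2$j0*a4$j0*a5$j0 * a3$j1*a6$j1)
      + (\<Sum>j0\<in>UNIV. \<Sum>j1\<in>UNIV. a1$j0*a2$j0*a3$j0*a6$j0 * a4$j1*a5$j1)
      + (\<Sum>j0\<in>UNIV. \<Sum>j1\<in>UNIV. a1$j0*a2$j0*a3$j0*a5$j0 * a4$j1*a6$j1)
      + (\<Sum>j0\<in>UNIV. \<Sum>j1\<in>UNIV. a1$j0*a2$j0*a3$j0*a4$j0 * a5$j1*a6$j1))
      + 16 * (\<Sum>i\<in>UNIV. a1$i*a2$i*a3$i*a4$i*a5$i*a6$i)"
    unfolding moment6_def kdelta_def
    by (simp add: mult_if_zero sum_if_zero sum.distrib sum_subtractf sum_distrib_left algebra_simps)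
  also have "\<dots> = ((a1 \<bullet> a2) * (a3 \<bullet> a4) * (a5 \<bullet> a6)
      + (a1 \<bullet> a2) * (a3 \<bullet> a5) * (a4 \<bullet> a6)
      + (a1 \<bullet> a2) * (a3 \<bullet> a6) * (a4 \<bullet> a5)
      + (a1 \<bullet> a3) * (a2 \<bullet> a4) * (a5 \<bullet> a6)
      + (a1 \<bullet> a3) * (a2 \<bullet> a5) * (a4 \<bullet> a6)
      + (a1 \<bullet> a3) * (a2 \<bullet> a6) * (a4 \<bullet> a5)
      + (a1 \<bullet> a4) * (a2 \<bullet> a3) * (a5 \<bullet> a6)
      + (a1 \<bullet> a4) * (a2 \<bullet> a5) * (a3 \<bullet> a6)
      + (a1 \<bullet> a4) * (a2 \<bullet> a6) * (a3 \<bullet> a5)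
      + (a1 \<bullet> a5) * (a2 \<bullet> a3) * (a4 \<bullet> a6)
      + (a1 \<bullet> a5) * (a2 \<bullet> a4) * (a3 \<bullet> a6)
      + (a1 \<bullet> a5) * (a2 \<bullet> a6) * (a3 \<bullet> a4)
      + (a1 \<bullet> a6) * (a2 \<bullet> a3) * (a4 \<bullet> a5)
      + (a1 \<bullet> a6) * (a2 \<bullet> a4) * (a3 \<bullet> a5)
      + (a1 \<bullet> a6) * (a2 \<bullet> a5) * (a3 \<bullet> a4))
      - 2 * ((a1 \<bullet> a2) * inner4 a3 a4 a5 a6 + (a1 \<bullet> a3) * inner4 a2 a4 a5 a6
      + (a1 \<bullet> a4) * inner4 a2 a3 a5 a6 + (a1 \<bullet> a5) * inner4 a2 a3 a4 a6
      + (a1 \<bullet> a6) * inner4 a2 a3 a4 a5 + inner4 a1 a4 a5 a6 * (a2 \<bullet> a3)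
      + inner4 a1 a3 a5 a6 * (a2 \<bullet> a4) + inner4 a1 a3 a4 a6 * (a2 \<bullet> a5)
      + inner4 a1 a3 a4 a5 * (a2 \<bullet> a6) + inner4 a1 a2 a5 a6 * (a3 \<bullet> a4)
      + inner4 a1 a2 a4 a6 * (a3 \<bullet> a5) + inner4 a1 a2 a4 a5 * (a3 \<bullet> a6)
      + inner4 a1 a2 a3 a6 * (a4 \<bullet> a5) + inner4 a1 a2 a3 a5 * (a4 \<bullet> a6)
      + inner4 a1 a2 a3 a4 * (a5 \<bullet> a6)) + 16 * inner6 a1 a2 a3 a4 a5 a6"
    by (simp only: inner_vec_sum inner4_def inner6_def, simp only: sum_product3,
        simp only: sum_product mult.assoc)
  finally show ?thesis .
qed

lemma inner_axis_one [simp]: "axis i 1 \<bullet> x = x $ i" "x \<bullet> axis i 1 = x $ i"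
  by (simp_all add: inner_axis inner_axis')

lemma axis_one_nth [simp]: "axis i (1::real) $ k = kdelta i k"
  by (simp add: axis_def kdelta_def)

lemma inner4_axis [simp]:
  "inner4 (axis i 1) b c d = b $ i * c $ i * d $ i"
  "inner4 a (axis i 1) c d = a $ i * c $ i * d $ i"
  "inner4 a b (axis i 1) d = a $ i * b $ i * d $ i"
  "inner4 a b c (axis i 1) = a $ i * b $ i * c $ i"
  unfolding inner4_def axis_def by (simp_all add: mult_if_zero)

lemma inner6_axis [simp]:
  "inner6 (axis i 1) b c d e f = b $ i * c $ i * d $ i * e $ i * f $ i"
  "inner6 a (axis i 1) c d e f = a $ i * c $ i * d $ i * e $ i * f $ i"
  unfolding inner6_def axis_def by (simp_all add: mult_if_zero)

section \<open>The projection matrices\<close>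

lemma invertible_matrix_inv_mult:
  assumes "invertible (A::real^'n^'n)"
  shows "A ** matrix_inv A = mat 1" "matrix_inv A ** A = mat 1"
proof -
  obtain B where "A ** B = mat 1 \<and> B ** A = mat 1" using assms unfolding invertible_def by blast
  then have "A ** matrix_inv A = mat 1 \<and> matrix_inv A ** A = mat 1"
    unfolding matrix_inv_def by (rule someI)
  then show "A ** matrix_inv A = mat 1" "matrix_inv A ** A = mat 1" by auto
qed

lemma transpose_matrix_inv_symmetric:
  assumes "invertible (A::real^'n^'n)" "transpose A = A"
  shows "transpose (matrix_inv A) = matrix_inv A"
proof -
  have left_inv: "transpose (matrix_inv A) ** A = mat 1"
    using invertible_matrix_inv_mult(1)[OF assms(1)] assms(2)
    by (metis matrix_transpose_mul transpose_mat)
  have "transpose (matrix_inv A) = transpose (matrix_inv A) ** (A ** matrix_inv A)"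
    using invertible_matrix_inv_mult(1)[OF assms(1)] by simp
  also have "\<dots> = matrix_inv A" using left_inv by (simp add: matrix_mul_assoc)
  finally show ?thesis .
qed

lemma transpose_diagm [simp]: "transpose (diagm v) = diagm v"
  by (simp add: transpose_def diagm_def vec_eq_iff)

lemma matrix_mul_diagm_nth [simp]: "(A ** diagm v) $ i $ j = A $ i $ j * v $ j"
  by (simp add: matrix_matrix_mult_def diagm_def mult_if_zero)

lemma diagm_matrix_mul_nth [simp]: "(diagm v ** A) $ i $ j = v $ i * A $ i $ j"
  by (simp add: matrix_matrix_mult_def diagm_def mult_if_zero)

lemma diagm_mult_vec_nth [simp]: "(diagm v *v x) $ i = v $ i * x $ i"
  by (simp add: matrix_vector_mult_def diagm_def mult_if_zero)

lemma diagm_nth: "diagm v $ i $ j = kdelta i j * v $ i"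
  by (simp add: diagm_def kdelta_def)

lemma sum_kdelta:
  fixes f :: "'n::finite \<Rightarrow> real"
  shows "(\<Sum>k\<in>UNIV. kdelta i k * f k) = f i" "(\<Sum>k\<in>UNIV. kdelta k j * f k) = f j"
  unfolding kdelta_def by (simp_all add: mult_if_zero)

lemma matrix_mul_nth: "(A ** B) $ i $ j = (\<Sum>k\<in>UNIV. A $ i $ k * B $ k $ j)"
  by (simp add: matrix_matrix_mult_def)

lemma matrix_vector_mult_nth: "(A *v x) $ i = (\<Sum>k\<in>UNIV. A $ i $ k * x $ k)"
  by (simp add: matrix_vector_mult_def)

lemma hadamard_nth: "(A \<odot> B) $ i $ j = A $ i $ j * B $ i $ j"
  by (simp add: hadamard_def)

lemma diagpart_eq_diagm: "diagpart A = diagm (\<chi> i. A $ i $ i)"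
  by (simp add: diagpart_def hadamard_def mat_def diagm_def vec_eq_iff)

lemma mat_1_minus_diagm: "mat 1 - diagm v = diagm (\<chi> i. 1 - v $ i)"
  by (simp add: mat_def diagm_def vec_eq_iff)

lemma mat_1_minus_2_diagm: "mat 1 - 2 *\<^sub>R diagm v = diagm (\<chi> i. 1 - 2 * v $ i)"
  by (simp add: mat_def diagm_def vec_eq_iff)

lemma inner_matrix_vector_mult:
  "(x::real^'n) \<bullet> (A *v y) = (\<Sum>i\<in>UNIV. \<Sum>j\<in>UNIV. x $ i * y $ j * A $ i $ j)"
  by (simp add: inner_vec_sum matrix_vector_mult_nth sum_distrib_left ac_simps)

lemma weighted_sum_combine:
  "(1 / N) * (\<Sum>i\<in>UNIV. w $ i * A i) + - (2 / N) * (\<Sum>i\<in>UNIV. w $ i * (B i + C i))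
     = (1 / N) * (\<Sum>i\<in>UNIV. (w::real^'n) $ i * (A i - 2 * B i - 2 * C i))"
  by (simp add: algebra_simps sum_subtractf sum.distrib sum_distrib_left sum_negf)

lemma mat_1_diag: "(mat 1 :: real^'n^'n) $ i $ i = 1"
  by (simp add: mat_def)

lemma inner_matrix_vector_mult_combine:
  "(1 / N) * ((x::real^'n) \<bullet> (A *v y)) + - (2 / N) * (x \<bullet> (B *v y))
     = (1 / N) * (\<Sum>i\<in>UNIV. \<Sum>j\<in>UNIV. x $ i * y $ j * (A $ i $ j - 2 * B $ i $ j))"
  unfolding inner_matrix_vector_mult
  by (simp add: algebra_simps sum_subtractf sum_distrib_left sum_negf)

locale iv_design =
  fixes e :: "real^'n" and Z :: "real^'k^'n"
  assumes invertible_ZDDZ: "invertible (transpose Z ** diagm e ** diagm e ** Z)"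
begin

abbreviation "V \<equiv> Vmat e Z"
abbreviation "P \<equiv> Pmat e Z"

lemma V_transpose: "transpose V = V"
proof -
  have "transpose (transpose Z ** diagm e ** diagm e ** Z) = transpose Z ** diagm e ** diagm e ** Z"
    by (simp add: matrix_transpose_mul matrix_mul_assoc)
  then show ?thesis
    using transpose_matrix_inv_symmetric[OF invertible_ZDDZ]
    unfolding Vmat_def by (simp add: matrix_transpose_mul matrix_mul_assoc)
qed

lemma V_symm: "V $ i $ j = V $ j $ i"
  using V_transpose by (metis transpose_def vec_lambda_beta)

lemma V_De2_V: "V ** diagm e ** diagm e ** V = V"
proof -
  let ?G = "transpose Z ** diagm e ** diagm e ** Z"
  have "V ** diagm e ** diagm e ** V = Z ** (matrix_inv ?G ** ?G) ** matrix_inv ?G ** transpose Z"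
    unfolding Vmat_def by (simp add: matrix_mul_assoc)
  also have "\<dots> = V" unfolding Vmat_def invertible_matrix_inv_mult(2)[OF invertible_ZDDZ] by simp
  finally show ?thesis .
qed

lemma V_De2_V_nth: "(\<Sum>k\<in>UNIV. V $ i $ k * (e $ k * e $ k) * V $ j $ k) = V $ i $ j"
proof -
  have "(V ** diagm e ** diagm e ** V) $ i $ j = V $ i $ j" using V_De2_V by simp
  then show ?thesis
    by (simp only: matrix_mul_nth[of "V ** diagm e ** diagm e" V])
       (simp add: V_symm[of _ j] mult.assoc)
qed

lemma P_nth: "P $ i $ j = e $ i * V $ i $ j * e $ j"
  unfolding Pmat_def by simp

lemma P_symm: "P $ i $ j = P $ j $ i"
  by (simp add: P_nth V_symm[of i j])

lemma inner_VDe_rows [simp]: "(V ** diagm e) $ i \<bullet> (V ** diagm e) $ j = V $ i $ j"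
  unfolding inner_vec_sum using V_De2_V_nth[of i j] by (simp add: ac_simps)

lemma inner_VDe_P_rows [simp]:
  "(V ** diagm e) $ i \<bullet> P $ j = e $ j * V $ i $ j" "P $ j \<bullet> (V ** diagm e) $ i = e $ j * V $ i $ j"
proof -
  have "(V ** diagm e) $ i \<bullet> P $ j = e $ j * (\<Sum>k\<in>UNIV. V $ i $ k * (e $ k * e $ k) * V $ j $ k)"
    unfolding inner_vec_sum by (simp add: P_nth sum_distrib_left ac_simps)
  then show "(V ** diagm e) $ i \<bullet> P $ j = e $ j * V $ i $ j"
    using V_De2_V_nth by simp
  then show "P $ j \<bullet> (V ** diagm e) $ i = e $ j * V $ i $ j" by (simp add: inner_commute)
qed

lemma inner_P_rows [simp]: "P $ i \<bullet> P $ j = e $ i * V $ i $ j * e $ j"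
proof -
  have "P $ i \<bullet> P $ j = e $ i * e $ j * (\<Sum>k\<in>UNIV. V $ i $ k * (e $ k * e $ k) * V $ j $ k)"
    unfolding inner_vec_sum by (simp add: P_nth sum_distrib_left ac_simps)
  then show ?thesis using V_De2_V_nth by simp
qed

text \<open>The score is a polynomial of degree at most three in the signs; these are its
  coefficients on \<open>x\<^sub>j\<close> and on \<open>a\<^sub>j\<close>.\<close>

definition x_coef :: "'n \<Rightarrow> real^'n \<Rightarrow> real" where
  "x_coef j r = ((V ** diagm e) $ j \<bullet> r) * (r $ j * (P $ j \<bullet> r) - 1)"

definition a_coef :: "'n \<Rightarrow> real^'n \<Rightarrow> real" where
  "a_coef j r = (P $ j \<bullet> r) * ((P $ j \<bullet> r) - r $ j)"

lemma V_De_mult_nth: "(V *v (diagm e *v r)) $ j = (V ** diagm e) $ j \<bullet> r"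
  by (simp only: matrix_vector_mult_nth[of V] diagm_mult_vec_nth inner_vec_sum matrix_mul_diagm_nth)
     (simp add: ac_simps)

lemma P_mult_nth: "(P *v r) $ j = P $ j \<bullet> r"
  by (simp add: matrix_vector_mult_nth inner_vec_sum)

lemma inner_P_mult: "r \<bullet> (P *v y) = (\<Sum>k\<in>UNIV. (P $ k \<bullet> r) * y $ k)"
proof -
  have "r \<bullet> (P *v y) = (\<Sum>i\<in>UNIV. \<Sum>k\<in>UNIV. r $ i * P $ i $ k * y $ k)"
    by (simp add: inner_vec_sum matrix_vector_mult_nth sum_distrib_left mult.assoc)
  also have "\<dots> = (\<Sum>k\<in>UNIV. \<Sum>i\<in>UNIV. r $ i * P $ k $ i * y $ k)"
    by (subst sum.swap, rule sum.cong[OF refl], rule sum.cong[OF refl]) (metis P_symm)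
  also have "\<dots> = (\<Sum>k\<in>UNIV. (P $ k \<bullet> r) * y $ k)"
    by (simp add: inner_vec_sum sum_distrib_right sum_distrib_left ac_simps)
  finally show ?thesis .
qed

lemma S_rad_eq_coefs:
  "S_rad e Z xb al r = (1 / real CARD('n)) *
     ((\<Sum>j\<in>UNIV. xb $ j * x_coef j r) + (\<Sum>j\<in>UNIV. al $ j * a_coef j r))"
proof -
  have t1: "xb \<bullet> (V *v (diagm e *v r)) = (\<Sum>j\<in>UNIV. xb $ j * ((V ** diagm e) $ j \<bullet> r))"
    by (simp only: inner_vec_sum V_De_mult_nth)
  have t2: "r \<bullet> ((diagm al ** P) *v r) = (\<Sum>j\<in>UNIV. al $ j * (r $ j * (P $ j \<bullet> r)))"
    by (simp add: matrix_vector_mul_assoc[symmetric] inner_vec_sum P_mult_nth ac_simps)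
  have t3: "r \<bullet> ((P ** diagm al ** P) *v r) = (\<Sum>j\<in>UNIV. al $ j * ((P $ j \<bullet> r) * (P $ j \<bullet> r)))"
    by (simp add: matrix_mul_assoc[symmetric] matrix_vector_mul_assoc[symmetric] inner_P_mult
        P_mult_nth ac_simps)
  have t4: "r \<bullet> ((P ** diagm r ** diagm xb ** V ** diagm e) *v r) =
     (\<Sum>j\<in>UNIV. xb $ j * (((V ** diagm e) $ j \<bullet> r) * r $ j * (P $ j \<bullet> r)))"
    by (simp add: matrix_mul_assoc[symmetric] matrix_vector_mul_assoc[symmetric] inner_P_mult
        V_De_mult_nth ac_simps)
  show ?thesis
    unfolding S_rad_def Let_def Pmat_def[symmetric] t1 t2 t3 t4 x_coef_def a_coef_def
    by (simp add: algebra_simps sum.distrib sum_subtractf sum_distrib_left sum_negf)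
qed

text \<open>The matrix of the \<open>z\<close>-parts of \<open>\<Omega>\<^sup>L + \<Omega>\<^sup>H\<close>; its diagonal also carries the
  \<open>u\<close>-parts.\<close>

definition Omega_z :: "real^'n^'n" where
  "Omega_z = (mat 1 - diagpart P) ** V ** (mat 1 - diagpart P)
     + diagpart P ** diagpart V ** (mat 1 - 2 *\<^sub>R diagpart P) + V \<odot> P \<odot> P + VW e Z"

abbreviation "Q \<equiv> diagpart P - P \<odot> P"

lemma rad_mean_x_coef_prod: "rad_mean (\<lambda>r. x_coef i r * x_coef j r) = Omega_z $ i $ j"
proof -
  let ?u = "\<lambda>i. (V ** diagm e) $ i" and ?d = "\<lambda>i. axis i (1::real)"
  have pointwise: "rad_mean (\<lambda>r. x_coef i r * x_coef j r) = rad_mean (\<lambda>r.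
       (?u i \<bullet> r) * (?d i \<bullet> r) * (P $ i \<bullet> r) * (?u j \<bullet> r) * (?d j \<bullet> r) * (P $ j \<bullet> r)
     - (?u i \<bullet> r) * (?d i \<bullet> r) * (P $ i \<bullet> r) * (?u j \<bullet> r)
     - (?u i \<bullet> r) * (?u j \<bullet> r) * (?d j \<bullet> r) * (P $ j \<bullet> r)
     + (?u i \<bullet> r) * (?u j \<bullet> r))" for i j
    by (simp only: x_coef_def inner_axis_one, rule arg_cong[where f = rad_mean], rule ext, algebra)
  have expand: "rad_mean (\<lambda>r. x_coef i r * x_coef j r) =
       rad_mean (\<lambda>r. (?u i \<bullet> r) * (?d i \<bullet> r) * (P $ i \<bullet> r) * (?u j \<bullet> r) * (?d j \<bullet> r) * (P $ j \<bullet> r))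
     - rad_mean (\<lambda>r. (?u i \<bullet> r) * (?d i \<bullet> r) * (P $ i \<bullet> r) * (?u j \<bullet> r))
     - rad_mean (\<lambda>r. (?u i \<bullet> r) * (?u j \<bullet> r) * (?d j \<bullet> r) * (P $ j \<bullet> r))
     + rad_mean (\<lambda>r. (?u i \<bullet> r) * (?u j \<bullet> r))" for i j
    using pointwise[of i j] by (simp only: rad_mean_add rad_mean_diff)
  show ?thesis
  proof (cases "i = j")
    case True
    have inner4_row: "inner4 (?u k) (P $ k) (?u k) (P $ k)
        = (\<Sum>j\<in>UNIV. (V $ k $ j)^2 * (e $ j)^2 * (P $ k $ j)^2)" for k
      unfolding inner4_def by (rule sum.cong[OF refl]) (simp add: P_nth power2_eq_square)
    show ?thesis
      unfolding expand rad_mean_inner6 rad_mean_inner4 rad_mean_inner2 True Omega_z_def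
      by (simp add: diagpart_eq_diagm mat_1_minus_diagm mat_1_minus_2_diagm diagm_nth hadamard_nth
          VW_def Let_def inner4_row P_nth kdelta_def)
         (simp add: algebra_simps power2_eq_square)
  next
    case False
    then have "kdelta i j = 0" "kdelta j i = 0" by (auto simp: kdelta_def)
    then show ?thesis
      unfolding expand rad_mean_inner6 rad_mean_inner4 rad_mean_inner2 Omega_z_def
      by (simp add: diagpart_eq_diagm mat_1_minus_diagm mat_1_minus_2_diagm diagm_nth hadamard_nth
          VW_def Let_def P_nth V_symm[of j i] False)
         (simp add: algebra_simps power2_eq_square)
  qed
qed

lemma Q_nth: "Q $ i $ j = kdelta i j * P $ i $ i - P $ i $ j * P $ i $ j"
  by (simp add: diagpart_eq_diagm diagm_nth hadamard_nth)

lemma Q_squared_nth: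
  "(Q ** Q) $ i $ j = kdelta i j * P $ i $ i * P $ i $ i - P $ i $ i * P $ i $ j * P $ i $ j
     - P $ i $ j * P $ i $ j * P $ j $ j + inner4 (P $ i) (P $ i) (P $ j) (P $ j)"
proof -
  have "(Q ** Q) $ i $ j = (\<Sum>k\<in>UNIV. (kdelta i k * P $ i $ i - P $ i $ k * P $ i $ k)
      * (kdelta k j * P $ k $ k - P $ k $ j * P $ k $ j))"
    by (simp only: matrix_mul_nth Q_nth)
  also have "\<dots> =
        (\<Sum>k\<in>UNIV. kdelta i k * (P $ i $ i * (kdelta k j * P $ k $ k - P $ k $ j * P $ k $ j)))
      - (\<Sum>k\<in>UNIV. kdelta k j * (P $ i $ k * P $ i $ k * P $ k $ k))
      + (\<Sum>k\<in>UNIV. P $ i $ k * P $ i $ k * P $ k $ j * P $ k $ j)"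
    by (simp add: algebra_simps sum_subtractf sum.distrib)
  also have "(\<Sum>k\<in>UNIV. P $ i $ k * P $ i $ k * P $ k $ j * P $ k $ j)
      = inner4 (P $ i) (P $ i) (P $ j) (P $ j)"
    unfolding inner4_def by (rule sum.cong[OF refl]) (simp add: P_symm[of _ j])
  finally show ?thesis
    unfolding sum_kdelta by (simp add: algebra_simps)
qed

lemma rad_mean_a_coef_prod:
  "rad_mean (\<lambda>r. a_coef i r * a_coef j r) = Q $ i $ j - 2 * (Q ** Q) $ i $ j"
proof -
  let ?d = "\<lambda>i. axis i (1::real)"
  have "rad_mean (\<lambda>r. a_coef i r * a_coef j r) = rad_mean (\<lambda>r.
       (P $ i \<bullet> r) * (P $ i \<bullet> r) * (P $ j \<bullet> r) * (P $ j \<bullet> r)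
     - (P $ i \<bullet> r) * (P $ i \<bullet> r) * (P $ j \<bullet> r) * (?d j \<bullet> r)
     - (P $ i \<bullet> r) * (?d i \<bullet> r) * (P $ j \<bullet> r) * (P $ j \<bullet> r)
     + (P $ i \<bullet> r) * (?d i \<bullet> r) * (P $ j \<bullet> r) * (?d j \<bullet> r))"
    by (simp only: a_coef_def inner_axis_one, rule arg_cong[where f = rad_mean], rule ext, algebra)
  then have expand: "rad_mean (\<lambda>r. a_coef i r * a_coef j r) =
       rad_mean (\<lambda>r. (P $ i \<bullet> r) * (P $ i \<bullet> r) * (P $ j \<bullet> r) * (P $ j \<bullet> r))
     - rad_mean (\<lambda>r. (P $ i \<bullet> r) * (P $ i \<bullet> r) * (P $ j \<bullet> r) * (?d j \<bullet> r))
     - rad_mean (\<lambda>r. (P $ i \<bullet> r) * (?d i \<bullet> r) * (P $ j \<bullet> r) * (P $ j \<bullet> r))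
     + rad_mean (\<lambda>r. (P $ i \<bullet> r) * (?d i \<bullet> r) * (P $ j \<bullet> r) * (?d j \<bullet> r))"
    by (simp only: rad_mean_add rad_mean_diff)
  show ?thesis
  proof (cases "i = j")
    case True
    then show ?thesis unfolding expand rad_mean_inner4 Q_squared_nth Q_nth
      by (simp add: P_nth kdelta_def; simp add: algebra_simps)
  next
    case False
    then have "kdelta i j = 0" "kdelta j i = 0" by (auto simp: kdelta_def)
    then show ?thesis unfolding expand rad_mean_inner4 Q_squared_nth Q_nth
      by (simp add: P_nth V_symm[of j i]; simp add: algebra_simps)
  qed
qed

lemma x_coef_odd: "x_coef i (- r) = - x_coef i r"
  by (simp add: x_coef_def inner_minus_right algebra_simps)

lemma a_coef_even: "a_coef i (- r) = a_coef i r"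
  by (simp add: a_coef_def inner_minus_right algebra_simps)

lemma rad_mean_x_coef: "rad_mean (x_coef i) = 0"
  by (rule rad_mean_odd_neg) (simp add: x_coef_odd)

lemma rad_mean_x_a_coef_prod:
  "rad_mean (\<lambda>r. x_coef i r * a_coef j r) = 0" "rad_mean (\<lambda>r. a_coef i r * x_coef j r) = 0"
  by (rule rad_mean_odd_neg, simp add: x_coef_odd a_coef_even)+

lemma rad_mean_a_coef: "rad_mean (a_coef i) = 0"
proof -
  have "rad_mean (a_coef i)
      = rad_mean (\<lambda>r. (P $ i \<bullet> r) * (P $ i \<bullet> r)) - rad_mean (\<lambda>r. (P $ i \<bullet> r) * (axis i 1 \<bullet> r))"
    unfolding a_coef_def by (simp add: rad_mean_diff[symmetric] algebra_simps)
  then show ?thesis unfolding rad_mean_inner2 by (simp add: P_nth)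
qed

end

section \<open>Centred noise with independent rows\<close>

locale centered_indep_rows =
  fixes M :: "'w measure" and u :: "'w \<Rightarrow> real^'p^'n"
  assumes prob_space_M: "prob_space M"
    and u_measurable: "\<And>i l. (\<lambda>w. u w $ i $ l) \<in> borel_measurable M"
    and u_indep: "prob_space.indep_vars M (\<lambda>_. borel) (\<lambda>i w. u w $ i) UNIV"
    and u_square_integrable: "\<And>i l. integrable M (\<lambda>w. (u w $ i $ l)^2)"
    and u_mean_zero: "\<And>i l. prob_space.expectation M (\<lambda>w. u w $ i $ l) = 0"
begin

interpretation prob_space M by (rule prob_space_M)

lemma integrable_u: "integrable M (\<lambda>w. u w $ i $ l)"
  by (rule square_integrable_imp_integrable[OF u_measurable u_square_integrable])

lemma integrable_u_mult: "integrable M (\<lambda>w. u w $ i $ l1 * u w $ j $ l2)"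
proof (rule Bochner_Integration.integrable_bound)
  show "integrable M (\<lambda>w. (u w $ i $ l1)^2 + (u w $ j $ l2)^2)"
    using u_square_integrable by simp
  show "(\<lambda>w. u w $ i $ l1 * u w $ j $ l2) \<in> borel_measurable M"
    using u_measurable by measurable
  have "\<bar>a * b\<bar> \<le> a^2 + b^2" for a b :: real
  proof -
    have "2 * (\<bar>a\<bar> * \<bar>b\<bar>) \<le> a^2 + b^2"
      using sum_squares_bound[of "\<bar>a\<bar>" "\<bar>b\<bar>"] by (simp add: mult.assoc)
    moreover have "0 \<le> \<bar>a\<bar> * \<bar>b\<bar>" by simp
    ultimately show ?thesis unfolding abs_mult by linarith
  qed
  then show
    "AE w in M. norm (u w $ i $ l1 * u w $ j $ l2) \<le> norm ((u w $ i $ l1)^2 + (u w $ j $ l2)^2)"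
    by simp
qed

lemma expectation_u_mult_distinct_rows:
  assumes "i \<noteq> j"
  shows "expectation (\<lambda>w. u w $ i $ l1 * u w $ j $ l2) = 0"
proof -
  define Y where "Y k v = (v::real^'p) $ (if k = i then l1 else l2)" for k v
  have "indep_vars (\<lambda>_. borel) (\<lambda>k w. Y k (u w $ k)) UNIV"
    by (rule indep_vars_compose2[OF u_indep])
       (auto simp: Y_def intro!: borel_measurable_continuous_onI continuous_on_component
         continuous_on_id)
  then have "indep_vars (\<lambda>_. borel) (\<lambda>k w. Y k (u w $ k)) {i, j}"
    by (rule indep_vars_subset) auto
  then have "expectation (\<lambda>w. \<Prod>k\<in>{i, j}. Y k (u w $ k))
      = (\<Prod>k\<in>{i, j}. expectation (\<lambda>w. Y k (u w $ k)))"
    by (rule indep_vars_lebesgue_integral[rotated]) (auto simp: Y_def integrable_u)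
  then show ?thesis using assms by (simp add: Y_def u_mean_zero)
qed

lemma integrable_linear_form: "integrable M (\<lambda>w. \<Sum>j\<in>UNIV. c j * u w $ j $ l)"
  by (intro Bochner_Integration.integrable_sum Bochner_Integration.integrable_mult_right
      integrable_u)

lemma expectation_linear_form: "expectation (\<lambda>w. \<Sum>j\<in>UNIV. c j * u w $ j $ l) = 0"
  by (subst Bochner_Integration.integral_sum)
     (auto intro!: Bochner_Integration.integrable_mult_right integrable_u simp: u_mean_zero)

lemma expectation_bilinear_form:
  "expectation (\<lambda>w. \<Sum>i\<in>UNIV. \<Sum>j\<in>UNIV. d i j * (u w $ i $ l1 * u w $ j $ l2))
     = (\<Sum>j\<in>UNIV. d j j * expectation (\<lambda>w. u w $ j $ l1 * u w $ j $ l2))"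
proof -
  have "expectation (\<lambda>w. \<Sum>i\<in>UNIV. \<Sum>j\<in>UNIV. d i j * (u w $ i $ l1 * u w $ j $ l2))
      = (\<Sum>i\<in>UNIV. \<Sum>j\<in>UNIV. d i j * expectation (\<lambda>w. u w $ i $ l1 * u w $ j $ l2))"
    by (simp add: Bochner_Integration.integrable_sum Bochner_Integration.integrable_mult_right
        integrable_u_mult)
  also have "\<dots> = (\<Sum>j\<in>UNIV. d j j * expectation (\<lambda>w. u w $ j $ l1 * u w $ j $ l2))"
  proof -
    have E: "expectation (\<lambda>w. u w $ i $ l1 * u w $ j $ l2)
        = (if i = j then expectation (\<lambda>w. u w $ i $ l1 * u w $ i $ l2) else 0)" for i j
      using expectation_u_mult_distinct_rows by auto
    show ?thesis by (subst E) (simp add: mult_if_zero if_distrib cong: if_cong)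
  qed
  finally show ?thesis .
qed

lemma expectation_affine_form:
  "expectation (\<lambda>w. a + (1/N) * (\<Sum>j\<in>UNIV. c j * u w $ j $ l)) = a"
  using integrable_linear_form expectation_linear_form by (simp add: prob_space)

lemma expectation_affine_form_mult:
  assumes "N \<noteq> 0"
  shows "expectation (\<lambda>w. N * (a1 + (1/N) * (\<Sum>j\<in>UNIV. c j * u w $ j $ l1))
                            * (a2 + (1/N) * (\<Sum>j\<in>UNIV. c j * u w $ j $ l2)))
    = N * a1 * a2 + (1/N) * (\<Sum>j\<in>UNIV. c j * c j * expectation (\<lambda>w. u w $ j $ l1 * u w $ j $ l2))"
proof -
  let ?L = "\<lambda>l w. \<Sum>j\<in>UNIV. c j * u w $ j $ l"
  let ?B = "\<lambda>w. \<Sum>i\<in>UNIV. \<Sum>j\<in>UNIV. (c i * c j) * (u w $ i $ l1 * u w $ j $ l2)"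
  have expand: "N * (a1 + (1/N) * ?L l1 w) * (a2 + (1/N) * ?L l2 w)
     = N * a1 * a2 + a1 * ?L l2 w + a2 * ?L l1 w + (1/N) * ?B w" for w
    using assms
    by (simp add: field_simps sum_product sum_distrib_left sum_distrib_right sum.distrib)
  have "integrable M ?B"
    by (intro Bochner_Integration.integrable_sum Bochner_Integration.integrable_mult_right
        integrable_u_mult)
  then show ?thesis
    unfolding expand
    using integrable_linear_form expectation_linear_form
      expectation_bilinear_form[of "\<lambda>i j. c i * c j"]
    by (simp add: prob_space)
qed

end

section \<open>Conditional mean and variance of the score\<close>

context iv_design
begin

lemma S_rad_shift:
  "S_rad e Z (zb + column l U) al r
     = S_rad e Z zb al r + (1 / real CARD('n)) * (\<Sum>j\<in>UNIV. x_coef j r * U $ j $ l)"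
  unfolding S_rad_eq_coefs by (simp add: column_def algebra_simps sum.distrib)

lemma rad_mean_S_rad: "rad_mean (S_rad e Z x b) = 0"
  unfolding S_rad_eq_coefs
  by (simp only: rad_mean_cmult rad_mean_add rad_mean_sum[OF finite_class.finite_UNIV]
      rad_mean_x_coef rad_mean_a_coef) simp

lemma rad_mean_S_rad_mult:
  "rad_mean (\<lambda>r. real CARD('n) * S_rad e Z x1 b1 r * S_rad e Z x2 b2 r)
     = (1 / real CARD('n)) * (\<Sum>i\<in>UNIV. \<Sum>j\<in>UNIV.
         x1 $ i * x2 $ j * Omega_z $ i $ j + b1 $ i * b2 $ j * (Q $ i $ j - 2 * (Q ** Q) $ i $ j))"
proof -
  have "real CARD('n) * S_rad e Z x1 b1 r * S_rad e Z x2 b2 r =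
     (1 / real CARD('n)) * (\<Sum>i\<in>UNIV. \<Sum>j\<in>UNIV.
        (x1 $ i * x2 $ j) * (x_coef i r * x_coef j r)
        + ((x1 $ i * b2 $ j) * (x_coef i r * a_coef j r)
        + ((b1 $ i * x2 $ j) * (a_coef i r * x_coef j r)
        + (b1 $ i * b2 $ j) * (a_coef i r * a_coef j r))))"
    for r
  proof -
    have "real CARD('n) * S_rad e Z x1 b1 r * S_rad e Z x2 b2 r =
       (1 / real CARD('n)) * ((\<Sum>i\<in>UNIV. x1 $ i * x_coef i r + b1 $ i * a_coef i r)
         * (\<Sum>j\<in>UNIV. x2 $ j * x_coef j r + b2 $ j * a_coef j r))"
      unfolding S_rad_eq_coefs sum.distrib by (simp add: field_simps)
    then show ?thesis
      unfolding sum_product by (simp add: algebra_simps)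
  qed
  then show ?thesis
    by (simp only: rad_mean_cmult rad_mean_sum[OF finite_class.finite_UNIV] rad_mean_add
        rad_mean_x_coef_prod rad_mean_x_a_coef_prod rad_mean_a_coef_prod)
       (simp add: algebra_simps)
qed

lemma Omega_z_diag:
  "Omega_z $ i $ i = V $ i $ i * (1 - P $ i $ i) - 2 * (V $ i $ i * P $ i $ i * (1 - 2 * P $ i $ i))
     - 2 * (\<Sum>j\<in>UNIV. (V $ i $ j)^2 * (e $ j)^2 * (P $ i $ j)^2)"
  unfolding Omega_z_def
  by (simp add: diagpart_eq_diagm mat_1_minus_diagm mat_1_minus_2_diagm diagm_nth hadamard_nth
      VW_def Let_def kdelta_def; simp add: algebra_simps)

lemma OmegaLz_plus_OmegaHz:
  "OmegaLz e Z z1 z2 + OmegaHz e Z z1 z2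
     = (1 / real CARD('n)) * (\<Sum>i\<in>UNIV. \<Sum>j\<in>UNIV. z1 $ i * z2 $ j * Omega_z $ i $ j)"
proof -
  have "OmegaLz e Z z1 z2 + OmegaHz e Z z1 z2 = (1 / real CARD('n)) * (z1 \<bullet> (Omega_z *v z2))"
    unfolding OmegaLz_def OmegaHz_def Let_def Omega_z_def
    by (simp only: matrix_vector_mult_add_rdistrib inner_add_right distrib_left)
  then show ?thesis by (simp only: inner_matrix_vector_mult)
qed

lemma OmegaLa_plus_OmegaHa:
  "OmegaLa e Z a1 a2 + OmegaHa e Z a1 a2
     = (1 / real CARD('n))
       * (\<Sum>i\<in>UNIV. \<Sum>j\<in>UNIV. a1 $ i * a2 $ j * (Q $ i $ j - 2 * (Q ** Q) $ i $ j))"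
  unfolding OmegaLa_def OmegaHa_def Let_def by (rule inner_matrix_vector_mult_combine)

lemma OmegaLu_plus_OmegaHu:
  "OmegaLu e Z SU + OmegaHu e Z SU = (1 / real CARD('n)) * (\<Sum>i\<in>UNIV. SU $ i * Omega_z $ i $ i)"
proof -
  have "(((V ** diagm e) \<odot> (V ** diagm e)) ** (P \<odot> P)) $ i $ i
      = (\<Sum>j\<in>UNIV. (V $ i $ j)^2 * (e $ j)^2 * (P $ i $ j)^2)" for i
    unfolding matrix_mul_nth
    by (rule sum.cong[OF refl]) (simp add: hadamard_nth P_symm[of _ i] power2_eq_square)
  then have Hu: "OmegaHu e Z SU = - (2 / real CARD('n)) * (\<Sum>i\<in>UNIV. SU $ i *
      (V $ i $ i * P $ i $ i * (1 - 2 * P $ i $ i)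
       + (\<Sum>j\<in>UNIV. (V $ i $ j)^2 * (e $ j)^2 * (P $ i $ j)^2)))"
    unfolding OmegaHu_def Let_def trace_def
    by (simp add: diagpart_eq_diagm mat_1_minus_2_diagm diagm_nth hadamard_nth
        matrix_mul_nth[of "diagm SU"] kdelta_def mat_1_diag)
  have Lu: "OmegaLu e Z SU
      = (1 / real CARD('n)) * (\<Sum>i\<in>UNIV. SU $ i * (V $ i $ i * (1 - P $ i $ i)))"
    unfolding OmegaLu_def Let_def trace_def
    by (simp add: diagpart_eq_diagm mat_1_minus_diagm diagm_nth kdelta_def mult.assoc)
  show ?thesis
    unfolding Lu Hu Omega_z_diag by (rule weighted_sum_combine)
qed

end

locale iv_model = iv_design e Z + centered_indep_rows M u
  for e :: "real^'n" and Z :: "real^'k^'n" and M :: "'w measure" and u :: "'w \<Rightarrow> real^'p^'n"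
begin

interpretation prob_space M by (rule prob_space_M)

lemma score_mean_zero:
  "measure_pmf.expectation rademacher_vec
     (\<lambda>r. expectation (\<lambda>w. S_rad e Z (zb + column l (u w)) al r)) = 0"
  unfolding S_rad_shift expectation_affine_form expectation_rademacher_vec by (rule rad_mean_S_rad)

lemma score_second_moment:
  fixes z1 z2 a1 a2 :: "real^'n" and l1 l2 :: 'p
  defines "SU \<equiv> \<chi> i. expectation (\<lambda>w. u w $ i $ l1 * u w $ i $ l2)
                   - expectation (\<lambda>w. u w $ i $ l1) * expectation (\<lambda>w. u w $ i $ l2)"
  shows "measure_pmf.expectation rademacher_vec (\<lambda>r. expectation (\<lambda>w. real CARD('n)
           * S_rad e Z (z1 + column l1 (u w)) a1 r * S_rad e Z (z2 + column l2 (u w)) a2 r))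
       = (OmegaLz e Z z1 z2 + OmegaLa e Z a1 a2 + OmegaLu e Z SU)
         + (OmegaHz e Z z1 z2 + OmegaHa e Z a1 a2 + OmegaHu e Z SU)"
proof -
  let ?N = "real CARD('n)"
  have SU_nth: "SU $ j = expectation (\<lambda>w. u w $ j $ l1 * u w $ j $ l2)" for j
    unfolding SU_def by (simp add: u_mean_zero)
  have "expectation (\<lambda>w. ?N
          * S_rad e Z (z1 + column l1 (u w)) a1 r * S_rad e Z (z2 + column l2 (u w)) a2 r)
      = ?N * S_rad e Z z1 a1 r * S_rad e Z z2 a2 r
        + (1 / ?N) * (\<Sum>j\<in>UNIV. x_coef j r * x_coef j r * SU $ j)"
    for r
    unfolding S_rad_shift SU_nth by (rule expectation_affine_form_mult) simp
  then have "measure_pmf.expectation rademacher_vec (\<lambda>r. expectation (\<lambda>w. ?N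
           * S_rad e Z (z1 + column l1 (u w)) a1 r * S_rad e Z (z2 + column l2 (u w)) a2 r))
      = rad_mean (\<lambda>r. ?N * S_rad e Z z1 a1 r * S_rad e Z z2 a2 r)
        + (1 / ?N) * (\<Sum>j\<in>UNIV. SU $ j * rad_mean (\<lambda>r. x_coef j r * x_coef j r))"
    unfolding expectation_rademacher_vec
    by (simp only: rad_mean_add rad_mean_cmult rad_mean_sum[OF finite_class.finite_UNIV]
        mult.commute[of _ "SU $ _"])
  also have "\<dots> = (1 / ?N) * (\<Sum>i\<in>UNIV. \<Sum>j\<in>UNIV.
         z1 $ i * z2 $ j * Omega_z $ i $ j + a1 $ i * a2 $ j * (Q $ i $ j - 2 * (Q ** Q) $ i $ j))
      + (1 / ?N) * (\<Sum>j\<in>UNIV. SU $ j * Omega_z $ j $ j)"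
    unfolding rad_mean_S_rad_mult rad_mean_x_coef_prod ..
  also have "\<dots> = (OmegaLz e Z z1 z2 + OmegaHz e Z z1 z2) + (OmegaLa e Z a1 a2 + OmegaHa e Z a1 a2)
      + (OmegaLu e Z SU + OmegaHu e Z SU)"
    unfolding OmegaLz_plus_OmegaHz OmegaLa_plus_OmegaHa OmegaLu_plus_OmegaHu
    by (simp add: sum.distrib distrib_left)
  finally show ?thesis by (simp only: ac_simps)
qed

end

theorem lemma2:
  fixes eps :: "real^'n"
    and Z :: "real^'k^'n"
    and Pi :: "real^'p^'k"
    and a :: "real^'p^'n"
    and M :: "'w measure"
    and u :: "'w \<Rightarrow> real^'p^'n"
  assumes inv: "invertible (transpose Z ** diagm eps ** diagm eps ** Z)"
    and M: "prob_space M"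
    and u_meas: "\<And>i l. (\<lambda>w. u w $ i $ l) \<in> borel_measurable M"
    and u_indep: "prob_space.indep_vars M (\<lambda>_. borel) (\<lambda>i w. u w $ i) UNIV"
    and u_sq: "\<And>i l. integrable M (\<lambda>w. (u w $ i $ l)^2)"
    and u_mean: "\<And>i l. prob_space.expectation M (\<lambda>w. u w $ i $ l) = 0"
  shows
    "(\<forall>l. measure_pmf.expectation rademacher_vec
            (\<lambda>r. prob_space.expectation M
               (\<lambda>w. S_rad eps Z (column l (Z ** Pi) + column l (u w)) (column l a) r)) = 0)
     \<and> (\<forall>l1 l2.
          (let SU = (\<chi> i. prob_space.expectation M (\<lambda>w. u w $ i $ l1 * u w $ i $ l2)
                         - prob_space.expectation M (\<lambda>w. u w $ i $ l1)
                           * prob_space.expectation M (\<lambda>w. u w $ i $ l2));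
               zb1 = column l1 (Z ** Pi); zb2 = column l2 (Z ** Pi);
               a1 = column l1 a; a2 = column l2 a in
           measure_pmf.expectation rademacher_vec
            (\<lambda>r. prob_space.expectation M
               (\<lambda>w. real CARD('n)
                     * S_rad eps Z (zb1 + column l1 (u w)) a1 r
                     * S_rad eps Z (zb2 + column l2 (u w)) a2 r))
           = (OmegaLz eps Z zb1 zb2 + OmegaLa eps Z a1 a2 + OmegaLu eps Z SU)
             + (OmegaHz eps Z zb1 zb2 + OmegaHa eps Z a1 a2 + OmegaHu eps Z SU)))"
proof -
  interpret iv_model eps Z M u
    by (rule iv_model.intro[OF iv_design.intro[OF inv]
          centered_indep_rows.intro[OF M u_meas u_indep u_sq u_mean]])
  show ?thesis
    unfolding Let_def by (intro conjI allI score_mean_zero score_second_moment)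
qed

end
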